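(* Let $V=\Sigma^aH(b)$ and $W=\Sigma^sH(t)$ be representation cells (so $0\le b\le a$ and $0\le t\le s$) with $a\geq s$, and with $b\geq t$ in case $a=s$. Then for any map $f\colon\Sigma^{-1}V\to W$ in $\mathcal D(\underline{\mathbb Z/2})$, exactly one of the following holds: (1) $\mathrm{tp}(\Sigma^{-1}V)=\mathrm{tp}(W)$ and $\mathrm{cowt}(\Sigma^{-1}V)=\mathrm{cowt}(W)$ (so $\Sigma^{-1}V=W$) and $f$ is homotopic to the identity; (2) $\mathrm{tp}(\Sigma^{-1}V)=\mathrm{tp}(W)$ and $\mathrm{cowt}(\Sigma^{-1}V)>\mathrm{cowt}(W)$, and $f$ is homotopic to the chain map which is the identity $F\to F$ in each degree where $\Sigma^{-1}V$ has an $F$, and is $p\colon H\to F$ in degree $\mathrm{cowt}(\Sigma^{-1}V)$; (3) $\mathrm{tp}(\Sigma^{-1}V)\ge\mathrm{tp}(W)$ and $\mathrm{cowt}(\Sigma^{-1}V)\le\mathrm{cowt}(W)-2$, and $f$ is homotopic to the chain map which is $u\colon F\to F$ in degree $\mathrm{tp}(W)$ and zero in all other degrees; (4) $f$ is null-homotopic.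
   Context: A $\underline{\mathbb Z/2}$-module is a pair of $\mathbb F_2$-vector spaces $M_\Theta,M_\bullet$ with maps $t\colon M_\Theta\to M_\Theta$, $p^*\colon M_\bullet\to M_\Theta$, $p_*\colon M_\Theta\to M_\bullet$ with $tp^*=p^*$, $p_*t=p_*$, $t^2=1$, $p^*p_*=1+t$, $p_*p^*=0$. $H$: both spaces $\mathbb F_2$, $t=p^*=\mathrm{id}$, $p_*=0$. $F$: $F_\Theta=\mathbb F_2^2$, $t$ the swap, $F_\bullet=\mathbb F_2$, $p_*(x,y)=x+y$, $p^*(z)=(z,z)$. $p\colon F\to H$ and $p\colon H\to F$ are the unique nonzero maps; $u=1+t\colon F\to F$. Homological grading, $(\Sigma C)_i=C_{i-1}$. $H(0)=H$ in degree $0$; for $q>0$, $H(q)$ is $F\xrightarrow{u}\cdots\xrightarrow{u}F\xrightarrow{p}H$ with $F$ in degrees $0,\dots,-(q-1)$ and $H$ in degree $-q$. A representation cell is a complex $\Sigma^mH(q)$ with $0\le q\le m$; for such a complex (and its desuspensions $\Sigma^{m-1}H(q)$, treated the same way) the topological dimension $\mathrm{tp}$ is the degree of its top $F$ (namely $m$ for $\Sigma^mH(q)$), the weight is $q$, and the coweight $\mathrm{cowt}$ is the degree $m-q$ of its bottom $H$. $\mathcal D(\underline{\mathbb Z/2})$ is the derived category; "homotopic" means equal in $\mathcal D(\underline{\mathbb Z/2})$ (equivalently chain homotopic, as these complexes are bounded complexes of projectives). *)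

theory Defs
  imports "HOL-Library.Z2" "Jordan_Normal_Form.Matrix"
begin

text \<open>A Z/2-module M is a pair of finite-dimensional F_2-vector spaces M_Theta = F_2^(dT M),
  M_bullet = F_2^(dB M) with the structure maps t (on M_Theta), p^* (M_bullet to M_Theta),
  p_* (M_Theta to M_bullet), given as matrices over the field bit = F_2.\<close>

datatype obj = Zo | Fo | Ho

fun dT :: "obj \<Rightarrow> nat" where
  "dT Zo = 0" | "dT Fo = 2" | "dT Ho = 1"

fun dB :: "obj \<Rightarrow> nat" where
  "dB Zo = 0" | "dB Fo = 1" | "dB Ho = 1"

fun tM :: "obj \<Rightarrow> bit mat" where
  "tM Zo = 0\<^sub>m 0 0"
| "tM Fo = mat_of_rows_list 2 [[0,1],[1,0]]"
| "tM Ho = 1\<^sub>m 1"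

fun pupM :: "obj \<Rightarrow> bit mat" where
  "pupM Zo = 0\<^sub>m 0 0"
| "pupM Fo = mat_of_rows_list 1 [[1],[1]]"
| "pupM Ho = 1\<^sub>m 1"

fun plwM :: "obj \<Rightarrow> bit mat" where
  "plwM Zo = 0\<^sub>m 0 0"
| "plwM Fo = mat_of_rows_list 2 [[1,1]]"
| "plwM Ho = 0\<^sub>m 1 1"

type_synonym mor = "bit mat \<times> bit mat"

definition is_mor :: "obj \<Rightarrow> obj \<Rightarrow> mor \<Rightarrow> bool" where
  "is_mor X Y f \<longleftrightarrow>
     fst f \<in> carrier_mat (dT Y) (dT X) \<and> snd f \<in> carrier_mat (dB Y) (dB X) \<and>
     fst f * tM X = tM Y * fst f \<and>
     fst f * pupM X = pupM Y * snd f \<and>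
     snd f * plwM X = plwM Y * fst f"

definition mcomp :: "mor \<Rightarrow> mor \<Rightarrow> mor" where
  "mcomp g f = (fst g * fst f, snd g * snd f)"

definition madd :: "mor \<Rightarrow> mor \<Rightarrow> mor" where
  "madd f g = (fst f + fst g, snd f + snd g)"

definition msub :: "mor \<Rightarrow> mor \<Rightarrow> mor" where
  "msub f g = (fst f - fst g, snd f - snd g)"

definition idm :: "obj \<Rightarrow> mor" where
  "idm X = (1\<^sub>m (dT X), 1\<^sub>m (dB X))"

definition zerom :: "obj \<Rightarrow> obj \<Rightarrow> mor" where
  "zerom X Y = (0\<^sub>m (dT Y) (dT X), 0\<^sub>m (dB Y) (dB X))"

text \<open>u = 1 + t : F to F\<close>
definition uF :: mor where
  "uF = (mat_of_rows_list 2 [[1,1],[1,1]], 0\<^sub>m 1 1)"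

text \<open>the unique nonzero map p : F to H\<close>
definition pFH :: mor where
  "pFH = (mat_of_rows_list 2 [[1,1]], 0\<^sub>m 1 1)"

text \<open>the unique nonzero map p : H to F\<close>
definition pHF :: mor where
  "pHF = (mat_of_rows_list 1 [[1],[1]], 1\<^sub>m 1)"

text \<open>Chain complexes (homological grading): object in each degree and differential
  d_i : C_i to C_(i-1).\<close>
record cplx =
  cobj :: "int \<Rightarrow> obj"
  cd :: "int \<Rightarrow> mor"

text \<open>A representation cell Sigma^m H(q) (and its desuspensions) is encoded by the pair (m, q).\<close>
type_synonym rcell = "int \<times> int"

definition tp :: "rcell \<Rightarrow> int" where "tp c = fst c"
definition wt :: "rcell \<Rightarrow> int" where "wt c = snd c"
definition cowt :: "rcell \<Rightarrow> int" where "cowt c = fst c - snd c"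

definition desusp :: "rcell \<Rightarrow> rcell" where "desusp c = (fst c - 1, snd c)"

definition cell_obj :: "rcell \<Rightarrow> int \<Rightarrow> obj" where
  "cell_obj c i = (if cowt c < i \<and> i \<le> tp c then Fo else if i = cowt c then Ho else Zo)"

definition cell :: "rcell \<Rightarrow> cplx" where
  "cell c = \<lparr> cobj = cell_obj c,
              cd = (\<lambda>i. if cell_obj c i = Fo \<and> cell_obj c (i - 1) = Fo then uF
                        else if cell_obj c i = Fo \<and> cell_obj c (i - 1) = Ho then pFH
                        else zerom (cell_obj c i) (cell_obj c (i - 1))) \<rparr>"

definition chain_map :: "cplx \<Rightarrow> cplx \<Rightarrow> (int \<Rightarrow> mor) \<Rightarrow> bool" where
  "chain_map C D f \<longleftrightarrow>
     (\<forall>i. is_mor (cobj C i) (cobj D i) (f i) \<and>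
          mcomp (cd D i) (f i) = mcomp (f (i - 1)) (cd C i))"

definition homotopic :: "cplx \<Rightarrow> cplx \<Rightarrow> (int \<Rightarrow> mor) \<Rightarrow> (int \<Rightarrow> mor) \<Rightarrow> bool" where
  "homotopic C D f g \<longleftrightarrow>
     (\<exists>h. (\<forall>i. is_mor (cobj C i) (cobj D (i + 1)) (h i)) \<and>
          (\<forall>i. msub (f i) (g i) = madd (mcomp (cd D (i + 1)) (h i)) (mcomp (h (i - 1)) (cd C i))))"

definition id_chain :: "cplx \<Rightarrow> int \<Rightarrow> mor" where
  "id_chain C i = idm (cobj C i)"

definition zero_chain :: "cplx \<Rightarrow> cplx \<Rightarrow> int \<Rightarrow> mor" where
  "zero_chain C D i = zerom (cobj C i) (cobj D i)"

definition null_homotopic :: "cplx \<Rightarrow> cplx \<Rightarrow> (int \<Rightarrow> mor) \<Rightarrow> bool" where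
  "null_homotopic C D f \<longleftrightarrow> homotopic C D f (zero_chain C D)"

definition cmap2 :: "rcell \<Rightarrow> rcell \<Rightarrow> int \<Rightarrow> mor" where
  "cmap2 X Y i = (if cowt X < i \<and> i \<le> tp X then idm Fo
                 else if i = cowt X then pHF
                 else zerom (cell_obj X i) (cell_obj Y i))"

text \<open>Case (3) map X to Y: u : F to F in degree tp Y, zero elsewhere.  (If Y has weight 0,
  so that Y has an H rather than an F in degree tp Y, the map in that degree is taken to be
  p : F to H.)\<close>
definition cmap3 :: "rcell \<Rightarrow> rcell \<Rightarrow> int \<Rightarrow> mor" where
  "cmap3 X Y i = (if i = tp Y then (if cell_obj Y i = Fo then uF else pFH)
                 else zerom (cell_obj X i) (cell_obj Y i))"

definition exactly_one :: "bool list \<Rightarrow> bool" where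
  "exactly_one ps \<longleftrightarrow> length (filter id ps) = 1"

end

theory Submission
  imports Defs
begin

text \<open>
  Every Hom-space between \<open>F\<close> and \<open>H\<close> is one bit, except \<open>End(F)\<close>, which is spanned by
  \<open>1\<close> and \<open>u\<close>; moreover \<open>u u = 0\<close>, and \<open>p p = u\<close> through \<open>H\<close>. So a map between cells is a
  pair of bit sequences, its coefficients of \<open>1\<close> and of \<open>u\<close> in each degree, and a homotopy with
  coefficients \<open>\<gamma> i\<close> adds \<open>\<gamma> i + \<gamma> (i - 1)\<close> to the \<open>u\<close>-coefficient wherever both cells
  are \<open>F\<close>, without touching the \<open>1\<close>-coefficient there. If the tops agree and
  \<open>cowt W \<le> cowt (\<Sigma>\<^sup>-\<^sup>1 V)\<close>, the chain map equations make the \<open>1\<close>-coefficient constant on the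
  overlap, and this constant is a complete invariant, realised by the identity or the map of
  case (2). If \<open>cowt (\<Sigma>\<^sup>-\<^sup>1 V) \<le> cowt W - 2\<close>, the invariant is the \<open>1\<close>-coefficient in degree
  \<open>cowt W\<close> plus all \<open>u\<close>-coefficients above it, realised by \<open>u\<close> in degree \<open>tp W\<close>. In every
  other configuration the chain map equations kill the \<open>1\<close>-coefficients that a homotopy cannot
  absorb, so \<open>f\<close> is null-homotopic.
\<close>

declare add_bit_eq_xor [simp del] mult_bit_eq_and [simp del]

lemma bit_add_eq_0_iff: "(x::bit) + y = 0 \<longleftrightarrow> x = y"
  by (cases x; cases y) simp_all

lemma sum_upt_2: "(\<Sum>i\<in>{0..<2::nat}. f i) = f 0 + f 1"
  by (simp add: numeral_2_eq_2)

section \<open>Morphisms between \<open>F\<close> and \<open>H\<close> in coordinates\<close>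

text \<open>\<open>mk_mor X Y a b\<close> is \<open>a + b u\<close> on \<open>F \<rightarrow> F\<close>, \<open>a p\<close> between \<open>F\<close> and \<open>H\<close>,
  \<open>a\<close> on \<open>H \<rightarrow> H\<close>, and \<open>0\<close> if \<open>X\<close> or \<open>Y\<close> is zero.\<close>
definition mk_mor :: "obj \<Rightarrow> obj \<Rightarrow> bit \<Rightarrow> bit \<Rightarrow> mor" where
  "mk_mor X Y a b = (case (X, Y) of
     (Fo, Fo) \<Rightarrow> (mat 2 2 (\<lambda>(i, j). if i = j then a + b else b), mat 1 1 (\<lambda>_. a))
   | (Fo, Ho) \<Rightarrow> (mat 1 2 (\<lambda>_. a), mat 1 1 (\<lambda>_. 0))
   | (Ho, Fo) \<Rightarrow> (mat 2 1 (\<lambda>_. a), mat 1 1 (\<lambda>_. a))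
   | (Ho, Ho) \<Rightarrow> (mat 1 1 (\<lambda>_. a), mat 1 1 (\<lambda>_. a))
   | _ \<Rightarrow> (0\<^sub>m (dT Y) (dT X), 0\<^sub>m (dB Y) (dB X)))"

definition coeff1 :: "obj \<Rightarrow> obj \<Rightarrow> mor \<Rightarrow> bit" where
  "coeff1 X Y m = (if X = Fo \<and> Y = Fo then snd m $$ (0, 0) else fst m $$ (0, 0))"

definition coeffu :: "mor \<Rightarrow> bit" where
  "coeffu m = fst m $$ (0, 1)"

lemma coeff1_mk_mor: "X \<noteq> Zo \<Longrightarrow> Y \<noteq> Zo \<Longrightarrow> coeff1 X Y (mk_mor X Y a b) = a"
  by (cases X; cases Y) (auto simp: mk_mor_def coeff1_def)

lemma coeffu_mk_mor: "coeffu (mk_mor Fo Fo a b) = b"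
  by (simp add: mk_mor_def coeffu_def)

lemma mk_mor_eq_iff:
  "mk_mor X Y a b = mk_mor X Y a' b' \<longleftrightarrow>
     (X \<noteq> Zo \<and> Y \<noteq> Zo \<longrightarrow> a = a') \<and> (X = Fo \<and> Y = Fo \<longrightarrow> b = b')"
proof
  assume "mk_mor X Y a b = mk_mor X Y a' b'"
  then show "(X \<noteq> Zo \<and> Y \<noteq> Zo \<longrightarrow> a = a') \<and> (X = Fo \<and> Y = Fo \<longrightarrow> b = b')"
    by (metis coeff1_mk_mor coeffu_mk_mor)
qed (cases X; cases Y; auto simp: mk_mor_def)

lemma zerom_eq_mk_mor: "zerom X Y = mk_mor X Y 0 0"
  by (cases X; cases Y) (auto simp: mk_mor_def zerom_def intro!: eq_matI)

lemma idm_eq_mk_mor: "idm X = mk_mor X X 1 0"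
  by (cases X) (auto simp: mk_mor_def idm_def less_2_cases_iff intro!: eq_matI)

lemma uF_eq_mk_mor: "uF = mk_mor Fo Fo 0 1"
  by (auto simp: mk_mor_def uF_def less_2_cases_iff mat_of_rows_list_def intro!: eq_matI)

lemma pFH_eq_mk_mor: "pFH = mk_mor Fo Ho 1 0"
  by (auto simp: mk_mor_def pFH_def less_2_cases_iff mat_of_rows_list_def intro!: eq_matI)

lemma pHF_eq_mk_mor: "pHF = mk_mor Ho Fo 1 0"
  by (auto simp: mk_mor_def pHF_def less_2_cases_iff mat_of_rows_list_def intro!: eq_matI)

text \<open>Composition obeys \<open>u u = 0\<close>, \<open>p p = 0\<close> through \<open>F\<close>, and \<open>p p = u\<close> through \<open>H\<close>.\<close>
definition comp_coeff1 :: "obj \<Rightarrow> obj \<Rightarrow> obj \<Rightarrow> bit \<Rightarrow> bit \<Rightarrow> bit" where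
  "comp_coeff1 X Y Z a' a = (if Y = Zo \<or> (X = Z \<and> X \<noteq> Y) then 0 else a' * a)"

definition comp_coeffu :: "obj \<Rightarrow> obj \<Rightarrow> obj \<Rightarrow> bit \<Rightarrow> bit \<Rightarrow> bit \<Rightarrow> bit \<Rightarrow> bit" where
  "comp_coeffu X Y Z a' b' a b =
     (if X = Fo \<and> Y = Fo \<and> Z = Fo then a' * b + b' * a
      else if X = Fo \<and> Y = Ho \<and> Z = Fo then a' * a else 0)"

lemma mcomp_mk_mor:
  "mcomp (mk_mor Y Z a' b') (mk_mor X Y a b) =
     mk_mor X Z (comp_coeff1 X Y Z a' a) (comp_coeffu X Y Z a' b' a b)"
  by (cases X; cases Y; cases Z)
    (auto simp: mk_mor_def mcomp_def comp_coeff1_def comp_coeffu_def less_2_cases_iff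
       scalar_prod_def sum_upt_2 algebra_simps intro!: eq_matI)

lemma madd_mk_mor: "madd (mk_mor X Y a b) (mk_mor X Y a' b') = mk_mor X Y (a + a') (b + b')"
  by (cases X; cases Y) (auto simp: mk_mor_def madd_def intro!: eq_matI)

lemma msub_mk_mor: "msub (mk_mor X Y a b) (mk_mor X Y a' b') = mk_mor X Y (a + a') (b + b')"
  by (cases X; cases Y) (auto simp: mk_mor_def msub_def intro!: eq_matI)

lemma tM_Fo [simp]: "tM Fo = mat 2 2 (\<lambda>(i, j). if i = j then 0 else 1)"
  and pupM_Fo [simp]: "pupM Fo = mat 2 1 (\<lambda>_. 1)"
  and plwM_Fo [simp]: "plwM Fo = mat 1 2 (\<lambda>_. 1)"
  by (auto simp: mat_of_rows_list_def less_2_cases_iff intro!: eq_matI)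

declare tM.simps(2) [simp del] pupM.simps(2) [simp del] plwM.simps(2) [simp del]

lemma is_mor_mk_mor: "is_mor X Y (mk_mor X Y a b)"
  unfolding is_mor_def
  by (cases X; cases Y)
    (auto simp: mk_mor_def less_2_cases_iff scalar_prod_def sum_upt_2 intro!: eq_matI)

lemma is_mor_Fo_Fo_eq:
  assumes "is_mor Fo Fo (A, B)"
  shows "(A, B) = mk_mor Fo Fo (B $$ (0, 0)) (A $$ (0, 1))"
proof -
  have A: "A \<in> carrier_mat 2 2" and B: "B \<in> carrier_mat 1 1"
    and t: "A * tM Fo = tM Fo * A" and p: "A * pupM Fo = pupM Fo * B"
    using assms by (auto simp: is_mor_def)
  have sym: "A $$ (1, 0) = A $$ (0, 1)" "A $$ (1, 1) = A $$ (0, 0)"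
    and B00: "B $$ (0, 0) = A $$ (0, 1) + A $$ (0, 0)"
    using arg_cong[where f = "\<lambda>M. M $$ (0, 0)", OF t] arg_cong[where f = "\<lambda>M. M $$ (0, 1)", OF t]
      arg_cong[where f = "\<lambda>M. M $$ (0, 0)", OF p] A B
    by (simp_all add: scalar_prod_def sum_upt_2 add.commute)
  have "A $$ (0, 0) = B $$ (0, 0) + A $$ (0, 1)"
    using B00 by (simp add: add.commute)
  with A B sym show ?thesis
    by (auto simp: mk_mor_def less_2_cases_iff intro!: eq_matI)
qed

lemma is_mor_Fo_Ho_eq:
  assumes "is_mor Fo Ho (A, B)"
  shows "(A, B) = mk_mor Fo Ho (A $$ (0, 0)) b"
proof -
  have A: "A \<in> carrier_mat 1 2" and B: "B \<in> carrier_mat 1 1"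
    and t: "A * tM Fo = tM Ho * A" and p: "A * pupM Fo = pupM Ho * B"
    using assms by (auto simp: is_mor_def)
  have "A $$ (0, 1) = A $$ (0, 0)" "B $$ (0, 0) = 0"
    using arg_cong[where f = "\<lambda>M. M $$ (0, 0)", OF t] arg_cong[where f = "\<lambda>M. M $$ (0, 0)", OF p]
      A B
    by (simp_all add: scalar_prod_def sum_upt_2)
  with A B show ?thesis
    by (auto simp: mk_mor_def less_2_cases_iff intro!: eq_matI)
qed

lemma is_mor_Ho_Fo_eq:
  assumes "is_mor Ho Fo (A, B)"
  shows "(A, B) = mk_mor Ho Fo (A $$ (0, 0)) b"
proof -
  have A: "A \<in> carrier_mat 2 1" and B: "B \<in> carrier_mat 1 1"
    and t: "A * tM Ho = tM Fo * A" and p: "A * pupM Ho = pupM Fo * B"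
    using assms by (auto simp: is_mor_def)
  have "A $$ (1, 0) = A $$ (0, 0)" "B $$ (0, 0) = A $$ (0, 0)"
    using arg_cong[where f = "\<lambda>M. M $$ (0, 0)", OF t] arg_cong[where f = "\<lambda>M. M $$ (0, 0)", OF p]
      A B
    by (simp_all add: scalar_prod_def sum_upt_2)
  with A B show ?thesis
    by (auto simp: mk_mor_def less_2_cases_iff intro!: eq_matI)
qed

lemma is_mor_Ho_Ho_eq:
  assumes "is_mor Ho Ho (A, B)"
  shows "(A, B) = mk_mor Ho Ho (A $$ (0, 0)) b"
proof -
  have "A \<in> carrier_mat 1 1" and "B = A"
    using assms by (auto simp: is_mor_def)
  then show ?thesis
    by (auto simp: mk_mor_def intro!: eq_matI)
qed

lemma is_mor_imp_eq_mk_mor: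
  assumes "is_mor X Y m"
  shows "m = mk_mor X Y (coeff1 X Y m) (coeffu m)"
proof -
  obtain A B where m: "m = (A, B)"
    by fastforce
  consider (zero) "X = Zo \<or> Y = Zo" | "X = Fo" "Y = Fo" | "X = Fo" "Y = Ho" | "X = Ho" "Y = Fo" | "X = Ho" "Y = Ho"
    by (cases X; cases Y) auto
  then show ?thesis
  proof cases
    case zero
    then show ?thesis
      using assms unfolding m by (cases X; cases Y) (auto simp: is_mor_def mk_mor_def intro!: eq_matI)
  qed (use assms is_mor_Fo_Fo_eq is_mor_Fo_Ho_eq is_mor_Ho_Fo_eq is_mor_Ho_Ho_eq in
    \<open>auto simp: m coeff1_def coeffu_def\<close>)
qed

section \<open>Maps between cells in coordinates\<close>

definition seg_obj :: "int \<Rightarrow> int \<Rightarrow> int \<Rightarrow> obj" where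
  "seg_obj L U i = (if L < i \<and> i \<le> U then Fo else if i = L then Ho else Zo)"

lemma seg_obj_Fo: "L < i \<Longrightarrow> i \<le> U \<Longrightarrow> seg_obj L U i = Fo"
  and seg_obj_Ho: "seg_obj L U L = Ho"
  and seg_obj_below: "i < L \<Longrightarrow> seg_obj L U i = Zo"
  and seg_obj_above: "U < i \<Longrightarrow> L \<le> U \<Longrightarrow> seg_obj L U i = Zo"
  by (simp_all add: seg_obj_def)

lemmas seg_obj_simps = seg_obj_Fo seg_obj_Ho seg_obj_below seg_obj_above

definition seg_d :: "int \<Rightarrow> int \<Rightarrow> int \<Rightarrow> mor" where
  "seg_d L U i = mk_mor (seg_obj L U i) (seg_obj L U (i - 1))
     (if i = L + 1 \<and> i \<le> U then 1 else 0) (if L + 1 < i \<and> i \<le> U then 1 else 0)"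

definition seg_map :: "int \<Rightarrow> int \<Rightarrow> int \<Rightarrow> int \<Rightarrow> (int \<Rightarrow> bit) \<Rightarrow> (int \<Rightarrow> bit) \<Rightarrow> int \<Rightarrow> mor"
  where "seg_map LX UX LY UY fa fb i = mk_mor (seg_obj LX UX i) (seg_obj LY UY i) (fa i) (fb i)"

definition is_chain_coeffs ::
  "int \<Rightarrow> int \<Rightarrow> int \<Rightarrow> int \<Rightarrow> (int \<Rightarrow> bit) \<Rightarrow> (int \<Rightarrow> bit) \<Rightarrow> bool" where
  "is_chain_coeffs LX UX LY UY fa fb \<longleftrightarrow>
     (\<forall>i. mcomp (seg_d LY UY i) (seg_map LX UX LY UY fa fb i) =
          mcomp (seg_map LX UX LY UY fa fb (i - 1)) (seg_d LX UX i))"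

definition htpy_eq_at :: "int \<Rightarrow> int \<Rightarrow> int \<Rightarrow> int \<Rightarrow> (int \<Rightarrow> bit) \<Rightarrow> (int \<Rightarrow> bit) \<Rightarrow>
    (int \<Rightarrow> bit) \<Rightarrow> (int \<Rightarrow> bit) \<Rightarrow> int \<Rightarrow> bool" where
  "htpy_eq_at LX UX LY UY fa fb \<gamma> \<delta> i \<longleftrightarrow>
     seg_map LX UX LY UY fa fb i =
       madd (mcomp (seg_d LY UY (i + 1)) (mk_mor (seg_obj LX UX i) (seg_obj LY UY (i + 1)) (\<gamma> i) (\<delta> i)))
         (mcomp (mk_mor (seg_obj LX UX (i - 1)) (seg_obj LY UY i) (\<gamma> (i - 1)) (\<delta> (i - 1)))
            (seg_d LX UX i))"

definition coeff_nullhomotopic ::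
  "int \<Rightarrow> int \<Rightarrow> int \<Rightarrow> int \<Rightarrow> (int \<Rightarrow> bit) \<Rightarrow> (int \<Rightarrow> bit) \<Rightarrow> bool" where
  "coeff_nullhomotopic LX UX LY UY fa fb \<longleftrightarrow> (\<exists>\<gamma> \<delta>. \<forall>i. htpy_eq_at LX UX LY UY fa fb \<gamma> \<delta> i)"

lemma cobj_cell: "cobj (cell c) = seg_obj (cowt c) (tp c)"
  by (auto simp: cell_def cell_obj_def seg_obj_def)

lemma cd_cell: "cd (cell c) = seg_d (cowt c) (tp c)"
  by (auto simp: cell_def cell_obj_def seg_obj_def seg_d_def uF_eq_mk_mor pFH_eq_mk_mor
      zerom_eq_mk_mor mk_mor_eq_iff)

lemma chain_map_cellE:
  assumes "chain_map (cell c) (cell e) f"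
  obtains fa fb where "f = seg_map (cowt c) (tp c) (cowt e) (tp e) fa fb"
    and "is_chain_coeffs (cowt c) (tp c) (cowt e) (tp e) fa fb"
proof
  let ?X = "seg_obj (cowt c) (tp c)" and ?Y = "seg_obj (cowt e) (tp e)"
  show f: "f = seg_map (cowt c) (tp c) (cowt e) (tp e) (\<lambda>i. coeff1 (?X i) (?Y i) (f i)) (\<lambda>i. coeffu (f i))"
    using assms is_mor_imp_eq_mk_mor unfolding chain_map_def cobj_cell
    by (simp add: fun_eq_iff seg_map_def)
  show "is_chain_coeffs (cowt c) (tp c) (cowt e) (tp e)
      (\<lambda>i. coeff1 (?X i) (?Y i) (f i)) (\<lambda>i. coeffu (f i))"
    using assms unfolding is_chain_coeffs_def f[symmetric] chain_map_def cd_cell by blast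
qed

lemma homotopic_cell_iff:
  "homotopic (cell c) (cell e) (seg_map (cowt c) (tp c) (cowt e) (tp e) fa fb)
       (seg_map (cowt c) (tp c) (cowt e) (tp e) ga gb) \<longleftrightarrow>
     coeff_nullhomotopic (cowt c) (tp c) (cowt e) (tp e) (\<lambda>i. fa i + ga i) (\<lambda>i. fb i + gb i)"
  (is "?htpy \<longleftrightarrow> ?coeffs")
proof
  let ?X = "seg_obj (cowt c) (tp c)" and ?Y = "seg_obj (cowt e) (tp e)"
  assume ?htpy
  then obtain h where h: "\<And>i. is_mor (?X i) (?Y (i + 1)) (h i)"
    and eq: "\<And>i. msub (seg_map (cowt c) (tp c) (cowt e) (tp e) fa fb i)
        (seg_map (cowt c) (tp c) (cowt e) (tp e) ga gb i) =
      madd (mcomp (seg_d (cowt e) (tp e) (i + 1)) (h i)) (mcomp (h (i - 1)) (seg_d (cowt c) (tp c) i))"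
    unfolding homotopic_def cobj_cell cd_cell by blast
  define \<gamma> where "\<gamma> i = coeff1 (?X i) (?Y (i + 1)) (h i)" for i
  define \<delta> where "\<delta> i = coeffu (h i)" for i
  have h_eq: "h i = mk_mor (?X i) (?Y (i + 1)) (\<gamma> i) (\<delta> i)" for i
    unfolding \<gamma>_def \<delta>_def by (rule is_mor_imp_eq_mk_mor[OF h])
  have "htpy_eq_at (cowt c) (tp c) (cowt e) (tp e) (\<lambda>i. fa i + ga i) (\<lambda>i. fb i + gb i) \<gamma> \<delta> i" for i
    using eq[of i] by (simp add: htpy_eq_at_def h_eq seg_map_def msub_mk_mor)
  then show ?coeffs
    unfolding coeff_nullhomotopic_def by blast
next
  assume ?coeffs
  then obtain \<gamma> \<delta>
    where "\<And>i. htpy_eq_at (cowt c) (tp c) (cowt e) (tp e) (\<lambda>i. fa i + ga i) (\<lambda>i. fb i + gb i) \<gamma> \<delta> i"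
    unfolding coeff_nullhomotopic_def by blast
  note eq = this[unfolded htpy_eq_at_def]
  show ?htpy
    unfolding homotopic_def cobj_cell cd_cell
    by (rule exI[of _ "\<lambda>i. mk_mor (seg_obj (cowt c) (tp c) i) (seg_obj (cowt e) (tp e) (i + 1)) (\<gamma> i) (\<delta> i)"])
      (use eq in \<open>simp add: is_mor_mk_mor seg_map_def msub_mk_mor\<close>)
qed

lemmas seg_comp_simps = seg_map_def seg_d_def mcomp_mk_mor madd_mk_mor mk_mor_eq_iff
  comp_coeff1_def comp_coeffu_def seg_obj_simps

lemma is_chain_coeffsD:
  "is_chain_coeffs LX UX LY UY fa fb \<Longrightarrow>
     mcomp (seg_d LY UY i) (seg_map LX UX LY UY fa fb i) =
     mcomp (seg_map LX UX LY UY fa fb (i - 1)) (seg_d LX UX i)"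
  unfolding is_chain_coeffs_def by blast

lemma int_interval_const:
  fixes v :: "int \<Rightarrow> 'a"
  assumes "\<And>j. k < j \<Longrightarrow> j \<le> m \<Longrightarrow> v j = v (j - 1)" and "k \<le> i" and "i \<le> m"
  shows "v i = v k"
  using assms(2,3)
proof (induction i rule: int_ge_induct)
  case (step i)
  then show ?case using assms(1)[of "i + 1"] by simp
qed simp

lemma chain_coeff1_const:
  assumes chain: "is_chain_coeffs LX UX LY UY fa fb" and "LY \<le> LX"
    and "LX \<le> i" "i \<le> UX" "i \<le> UY"
  shows "fa i = fa LX"
proof (rule int_interval_const[where m = "min UX UY"])
  show "fa j = fa (j - 1)" if "LX < j" "j \<le> min UX UY" for j
    using is_chain_coeffsD[OF chain, of j] assms(2) that
    by (cases "j = LX + 1"; cases "LX = LY") (simp_all add: seg_comp_simps)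
qed (use assms in auto)

lemma chain_coeff1_top:
  assumes chain: "is_chain_coeffs LX UX LY UY fa fb" and "LY \<le> LX" "LX \<le> UY" "UY < UX"
  shows "fa UY = 0"
  using is_chain_coeffsD[OF chain, of "UY + 1"] assms(2-)
  by (cases "LX = UY"; cases "LY = UY") (simp_all add: seg_comp_simps)

lemma chain_coeff1_vanish:
  assumes chain: "is_chain_coeffs LX UX LY UY fa fb" and "LX < LY"
    and "LY < i" "i \<le> UX" "i \<le> UY"
  shows "fa i = 0"
proof -
  have "fa (LY + 1) = 0"
    using is_chain_coeffsD[OF chain, of "LY + 1"] assms(2-) by (simp add: seg_comp_simps)
  moreover have "fa i = fa (LY + 1)"
  proof (rule int_interval_const[where m = "min UX UY"])
    show "fa j = fa (j - 1)" if "LY + 1 < j" "j \<le> min UX UY" for j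
      using is_chain_coeffsD[OF chain, of j] assms(2) that by (simp add: seg_comp_simps)
  qed (use assms in auto)
  ultimately show ?thesis
    by simp
qed

section \<open>Null-homotopy criteria\<close>

lemmas htpy_simps = htpy_eq_at_def seg_comp_simps

lemma sum_greaterThanAtMost_pred:
  "(i::int) \<le> U \<Longrightarrow> (\<Sum>j\<in>{i - 1<..U}. w j) = w i + (\<Sum>j\<in>{i<..U}. w j)"
proof -
  assume "i \<le> U"
  then have "{i - 1<..U} = insert i {i<..U}"
    by auto
  then show ?thesis
    by simp
qed

lemma coeff_nullhomotopicI_bottom:
  assumes "LY \<le> LX" "LX \<le> UX" "LY \<le> UY" "UY \<le> UX"
    and "\<And>i. LX \<le> i \<Longrightarrow> i \<le> UY \<Longrightarrow> ea i = 0"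
  shows "coeff_nullhomotopic LX UX LY UY ea eb"
  unfolding coeff_nullhomotopic_def
proof (intro exI allI)
  fix i
  txt \<open>The tail sums telescope, \<open>eb j = \<gamma> j + \<gamma> (j - 1)\<close>, absorbing the \<open>u\<close>-coefficients.\<close>
  define \<gamma> where "\<gamma> i = (\<Sum>j\<in>{i<..UY}. eb j)" for i
  have \<gamma>_pred: "\<gamma> (j - 1) = eb j + \<gamma> j" if "j \<le> UY" for j
    unfolding \<gamma>_def using that by (rule sum_greaterThanAtMost_pred)
  have \<gamma>_top: "\<gamma> UY = 0"
    unfolding \<gamma>_def by simp
  show "htpy_eq_at LX UX LY UY ea eb \<gamma> (\<lambda>_. 0) i"
  proof (cases "LX \<le> i \<and> i \<le> UY")
    case True
    then have "i = LX \<or> i = LX + 1 \<or> LX + 1 < i" "i < UY \<or> i = UY" "LY < LX \<or> LY = LX"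
      using assms(1) by presburger+
    then show ?thesis
      using assms(1-4) assms(5)[of i] \<gamma>_pred[of i] \<gamma>_top True
      by (elim disjE) (simp_all add: htpy_simps add.commute)
  next
    case False
    then show ?thesis
      using assms(1-4) by (cases "i < LX") (simp_all add: htpy_simps)
  qed
qed

lemma coeff_nullhomotopicD_bottom:
  assumes "LY \<le> LX" "LX \<le> UY" "LX \<le> UX" and "coeff_nullhomotopic LX UX LY UY ea eb"
  shows "ea LX = 0"
proof -
  obtain \<gamma> \<delta> where "htpy_eq_at LX UX LY UY ea eb \<gamma> \<delta> LX"
    using assms(4) unfolding coeff_nullhomotopic_def by blast
  moreover have "LY < LX \<or> LY = LX" "LX < UY \<or> LX = UY"
    using assms(1,2) by auto
  ultimately show ?thesis
    using assms(1-3) by (elim disjE) (simp_all add: htpy_simps)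
qed

text \<open>When the source is \<open>F\<close> in degrees \<open>L - 1 .. U\<close>, a homotopy changes the \<open>1\<close>-coefficient
  in degree \<open>L\<close> by \<open>\<gamma> L\<close> and the \<open>u\<close>-coefficient in degree \<open>j > L\<close> by \<open>\<gamma> j + \<gamma> (j - 1)\<close>,
  with \<open>\<gamma> U\<close> not occurring; so this sum is invariant.\<close>
definition coeff_obstruction :: "int \<Rightarrow> int \<Rightarrow> (int \<Rightarrow> bit) \<Rightarrow> (int \<Rightarrow> bit) \<Rightarrow> bit" where
  "coeff_obstruction L U ea eb = ea L + (\<Sum>j\<in>{L<..U}. eb j)"

lemma coeff_obstruction_Suc:
  assumes "L < U"
  shows "coeff_obstruction L U ea eb = coeff_obstruction L (U - 1) ea eb + eb U"
proof -
  have "{L<..U} = insert U {L<..U - 1}"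
    using assms by auto
  then show ?thesis
    by (simp add: coeff_obstruction_def ac_simps)
qed

lemma coeff_nullhomotopicI_gap:
  assumes "LX + 2 \<le> LY" "LY \<le> UY" "UY \<le> UX"
    and "\<And>i. LY < i \<Longrightarrow> i \<le> UY \<Longrightarrow> ea i = 0" and "coeff_obstruction LY UY ea eb = 0"
  shows "coeff_nullhomotopic LX UX LY UY ea eb"
  unfolding coeff_nullhomotopic_def
proof (intro exI allI)
  fix i
  define \<gamma> where "\<gamma> i = (\<Sum>j\<in>{i<..UY}. eb j)" for i
  have \<gamma>_pred: "\<gamma> (j - 1) = eb j + \<gamma> j" if "j \<le> UY" for j
    unfolding \<gamma>_def using that by (rule sum_greaterThanAtMost_pred)
  have \<gamma>_top: "\<gamma> UY = 0"
    unfolding \<gamma>_def by simp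
  have \<gamma>_bottom: "ea LY = \<gamma> LY"
    using assms(5) by (simp add: coeff_obstruction_def \<gamma>_def bit_add_eq_0_iff)
  have "i < LY \<or> i = LY \<and> LY < UY \<or> i = LY \<and> LY = UY \<or> LY < i \<and> i < UY \<or> LY < i \<and> i = UY
      \<or> UY < i"
    using assms(2) by presburger
  then show "htpy_eq_at LX UX LY UY ea eb \<gamma> (\<lambda>_. 0) i"
    using assms(1-3) assms(4)[of i] \<gamma>_pred[of i] \<gamma>_top \<gamma>_bottom
    by (elim disjE conjE) (simp_all add: htpy_simps add.commute)
qed

lemma coeff_nullhomotopicD_gap:
  assumes "LX + 2 \<le> LY" "LY \<le> UY" "UY \<le> UX" and "coeff_nullhomotopic LX UX LY UY ea eb"
  shows "coeff_obstruction LY UY ea eb = 0"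
proof -
  obtain \<gamma> \<delta> where htpy: "\<And>i. htpy_eq_at LX UX LY UY ea eb \<gamma> \<delta> i"
    using assms(4) unfolding coeff_nullhomotopic_def by blast
  show ?thesis
  proof (cases "LY = UY")
    case True
    then show ?thesis
      using htpy[of LY] assms(1-3) by (simp add: htpy_simps coeff_obstruction_def)
  next
    case False
    have "(\<Sum>j\<in>{k<..UY}. eb j) = \<gamma> k" if "LY \<le> k" "k \<le> UY - 1" for k
      using that(2,1)
    proof (induction k rule: int_le_induct)
      case base
      have "{UY - 1<..UY} = {UY}"
        by auto
      then show ?case
        using htpy[of UY] assms(1-3) False by (simp add: htpy_simps)
    next
      case (step k)
      then have "eb k = \<gamma> k + \<gamma> (k - 1)"
        using htpy[of k] assms(1-3) by (simp add: htpy_simps)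
      then show ?case
        using step sum_greaterThanAtMost_pred[of k UY eb] by (simp add: add.assoc)
    qed
    moreover have "ea LY = \<gamma> LY"
      using htpy[of LY] assms(1-3) False by (simp add: htpy_simps)
    ultimately show ?thesis
      using assms(2) False by (simp add: coeff_obstruction_def)
  qed
qed

lemma coeff_nullhomotopicI_adjacent:
  assumes "LY = LX + 1" "LY \<le> UY" "UY \<le> UX"
    and "\<And>i. LY < i \<Longrightarrow> i \<le> UY \<Longrightarrow> ea i = 0"
  shows "coeff_nullhomotopic LX UX LY UY ea eb"
  unfolding coeff_nullhomotopic_def
proof (intro exI allI)
  fix i
  define \<gamma> where "\<gamma> i = (if i < LY then coeff_obstruction LY UY ea eb else \<Sum>j\<in>{i<..UY}. eb j)" for i
  have \<gamma>_pred: "\<gamma> (j - 1) = eb j + \<gamma> j" if "LY < j" "j \<le> UY" for j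
    unfolding \<gamma>_def using that sum_greaterThanAtMost_pred[of j UY eb] by simp
  have \<gamma>_top: "\<gamma> UY = 0"
    unfolding \<gamma>_def using assms(2) by simp
  have \<gamma>_bottom: "\<gamma> LX = ea LY + \<gamma> LY"
    unfolding \<gamma>_def coeff_obstruction_def using assms(1) by simp
  have "i < LY \<or> i = LY \<and> LY < UY \<or> i = LY \<and> LY = UY \<or> LY < i \<and> i < UY \<or> LY < i \<and> i = UY \<or> UY < i"
    using assms(2) by presburger
  then show "htpy_eq_at LX UX LY UY ea eb \<gamma> (\<lambda>_. 0) i"
    using assms(1-3) assms(4)[of i] \<gamma>_pred[of i] \<gamma>_top \<gamma>_bottom
    by (elim disjE conjE) (simp_all add: htpy_simps add.commute)
qed

lemma coeff_nullhomotopicI_raised: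
  assumes "LX < LY" "UY = UX + 1" "LY \<le> UY"
    and "\<And>i. LY < i \<Longrightarrow> i \<le> UX \<Longrightarrow> ea i = 0"
  shows "coeff_nullhomotopic LX UX LY UY ea eb"
  unfolding coeff_nullhomotopic_def
proof (intro exI allI)
  fix i
  define \<gamma> where "\<gamma> i = (if i < LY then 0 else coeff_obstruction LY i ea eb)" for i
  have \<gamma>_succ: "\<gamma> j = \<gamma> (j - 1) + eb j" if "LY < j" for j
    unfolding \<gamma>_def using that coeff_obstruction_Suc[of LY j] by simp
  have \<gamma>_bottom: "\<gamma> LY = ea LY" "\<gamma> (LY - 1) = 0"
    unfolding \<gamma>_def coeff_obstruction_def by simp_all
  have "i < LY \<or> UX < i \<or> i = LY \<and> LY = LX + 1 \<and> i \<le> UX \<or> i = LY \<and> LX + 1 < LY \<and> i \<le> UX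
      \<or> LY < i \<and> i \<le> UX"
    using assms(1) by presburger
  then show "htpy_eq_at LX UX LY UY ea eb \<gamma> (\<lambda>_. 0) i"
    using assms(1-3) assms(4)[of i] \<gamma>_succ[of i] \<gamma>_bottom
    by (elim disjE conjE) (simp_all add: htpy_simps add.commute)
qed

section \<open>Classification\<close>

lemma coeff_nullhomotopic_iff_bottom:
  assumes "LY \<le> LX" "LX \<le> UY" "UY \<le> UX"
    and "\<And>i. LX \<le> i \<Longrightarrow> i \<le> UY \<Longrightarrow> ea i = ea LX"
  shows "coeff_nullhomotopic LX UX LY UY ea eb \<longleftrightarrow> ea LX = 0"
proof
  show "ea LX = 0" if "coeff_nullhomotopic LX UX LY UY ea eb"
    using assms(1-3) by (intro coeff_nullhomotopicD_bottom[OF _ _ _ that]) auto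
  show "coeff_nullhomotopic LX UX LY UY ea eb" if "ea LX = 0"
  proof (rule coeff_nullhomotopicI_bottom)
    show "ea i = 0" if "LX \<le> i" "i \<le> UY" for i
      using assms(4)[OF that] \<open>ea LX = 0\<close> by simp
  qed (use assms(1-3) in auto)
qed

lemma coeff_nullhomotopic_iff_obstruction:
  assumes "LX + 2 \<le> LY" "LY \<le> UY" "UY \<le> UX"
    and "\<And>i. LY < i \<Longrightarrow> i \<le> UY \<Longrightarrow> ea i = 0"
  shows "coeff_nullhomotopic LX UX LY UY ea eb \<longleftrightarrow> coeff_obstruction LY UY ea eb = 0"
proof
  show "coeff_obstruction LY UY ea eb = 0" if "coeff_nullhomotopic LX UX LY UY ea eb"
    using assms(1-3) that by (rule coeff_nullhomotopicD_gap)
  show "coeff_nullhomotopic LX UX LY UY ea eb" if "coeff_obstruction LY UY ea eb = 0"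
    using assms that by (intro coeff_nullhomotopicI_gap) auto
qed

lemma coeff_obstruction_add:
  "coeff_obstruction L U (\<lambda>i. fa i + ga i) (\<lambda>i. fb i + gb i) =
     coeff_obstruction L U fa fb + coeff_obstruction L U ga gb"
  by (simp add: coeff_obstruction_def sum.distrib ac_simps)

lemma same_top_dichotomy:
  assumes chain: "is_chain_coeffs LX UX LY UY fa fb" and "LY \<le> LX" "LX \<le> UY" "UY = UX"
  shows "coeff_nullhomotopic LX UX LY UY (\<lambda>i. fa i + 1) fb \<longleftrightarrow>
    \<not> coeff_nullhomotopic LX UX LY UY fa fb"
proof -
  have const: "fa i = fa LX" if "LX \<le> i" "i \<le> UY" for i
    using assms(2-4) that by (intro chain_coeff1_const[OF chain]) auto
  have "coeff_nullhomotopic LX UX LY UY (\<lambda>i. fa i + 1) fb \<longleftrightarrow> fa LX + 1 = 0"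
  proof (rule coeff_nullhomotopic_iff_bottom)
    show "fa i + 1 = fa LX + 1" if "LX \<le> i" "i \<le> UY" for i
      using const[OF that] by (rule arg_cong)
  qed (use assms(2-4) in auto)
  moreover have "coeff_nullhomotopic LX UX LY UY fa fb \<longleftrightarrow> fa LX = 0"
    using const by (rule coeff_nullhomotopic_iff_bottom[rotated 3]) (use assms(2-4) in auto)
  ultimately show ?thesis
    by (cases "fa LX") simp_all
qed

lemma gap_dichotomy:
  assumes chain: "is_chain_coeffs LX UX LY UY fa fb" and "LX + 2 \<le> LY" "LY \<le> UY" "UY \<le> UX"
  defines "ga \<equiv> \<lambda>i. if i = UY \<and> LY = UY then 1 else 0" and "gb \<equiv> \<lambda>i. if i = UY then 1 else 0"
  shows "coeff_nullhomotopic LX UX LY UY (\<lambda>i. fa i + ga i) (\<lambda>i. fb i + gb i) \<longleftrightarrow>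
    \<not> coeff_nullhomotopic LX UX LY UY fa fb"
proof -
  have fa: "fa i = 0" if "LY < i" "i \<le> UY" for i
    using assms(2-4) that by (intro chain_coeff1_vanish[OF chain]) auto
  have "coeff_obstruction LY UY ga gb = 1"
    using assms(3) by (auto simp: coeff_obstruction_def ga_def gb_def)
  moreover have "coeff_nullhomotopic LX UX LY UY (\<lambda>i. fa i + ga i) (\<lambda>i. fb i + gb i) \<longleftrightarrow>
      coeff_obstruction LY UY (\<lambda>i. fa i + ga i) (\<lambda>i. fb i + gb i) = 0"
    by (rule coeff_nullhomotopic_iff_obstruction) (use assms(2-4) fa in \<open>simp_all add: ga_def\<close>)
  moreover have "coeff_nullhomotopic LX UX LY UY fa fb \<longleftrightarrow> coeff_obstruction LY UY fa fb = 0"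
    by (rule coeff_nullhomotopic_iff_obstruction) (use assms(2-4) fa in simp_all)
  ultimately show ?thesis
    by (cases "coeff_obstruction LY UY fa fb") (simp_all add: coeff_obstruction_add)
qed

lemma coeff_classification:
  assumes chain: "is_chain_coeffs LX UX LY UY fa fb"
    and "LX \<le> UX" "LY \<le> UY" "UY \<le> UX + 1" "UY = UX + 1 \<Longrightarrow> LX < LY"
  shows "exactly_one
    [UX = UY \<and> LX = LY \<and> coeff_nullhomotopic LX UX LY UY (\<lambda>i. fa i + 1) fb,
     UX = UY \<and> LY < LX \<and> coeff_nullhomotopic LX UX LY UY (\<lambda>i. fa i + 1) fb,
     UY \<le> UX \<and> LX \<le> LY - 2 \<and> coeff_nullhomotopic LX UX LY UY
       (\<lambda>i. fa i + (if i = UY \<and> LY = UY then 1 else 0)) (\<lambda>i. fb i + (if i = UY then 1 else 0)),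
     coeff_nullhomotopic LX UX LY UY fa fb]"
proof -
  consider (raised) "UY = UX + 1" | (gap) "UY \<le> UX" "LX + 2 \<le> LY" | (adjacent) "UY \<le> UX" "LY = LX + 1"
    | (same_top) "UY = UX" "LY \<le> LX" | (lower_top) "UY < UX" "LY \<le> LX"
    using assms(4) by linarith
  then show ?thesis
  proof cases
    case raised
    have "coeff_nullhomotopic LX UX LY UY fa fb"
      by (rule coeff_nullhomotopicI_raised) (use raised assms(3,5) chain_coeff1_vanish[OF chain] in auto)
    then show ?thesis
      using raised by (simp add: exactly_one_def)
  next
    case gap
    then show ?thesis
      using gap_dichotomy[OF chain gap(2) assms(3) gap(1)] by (simp add: exactly_one_def)
  next
    case adjacent
    have "coeff_nullhomotopic LX UX LY UY fa fb"
      by (rule coeff_nullhomotopicI_adjacent) (use adjacent assms(3) chain_coeff1_vanish[OF chain] in auto)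
    then show ?thesis
      using adjacent by (simp add: exactly_one_def)
  next
    case same_top
    then show ?thesis
      using same_top_dichotomy[OF chain same_top(2) _ same_top(1)] assms(2)
      by (cases "LX = LY") (auto simp: exactly_one_def)
  next
    case lower_top
    have "fa i = 0" if "LX \<le> i" "i \<le> UY" for i
    proof -
      have "fa i = fa LX" "fa UY = fa LX"
        using lower_top that by (auto intro: chain_coeff1_const[OF chain])
      with chain_coeff1_top[OF chain] lower_top that show ?thesis
        by simp
    qed
    then have "coeff_nullhomotopic LX UX LY UY fa fb"
      by (rule coeff_nullhomotopicI_bottom[rotated 4]) (use lower_top assms(2,3) in auto)
    then show ?thesis
      using lower_top by (simp add: exactly_one_def)
  qed
qed

lemma zero_chain_cell:
  "zero_chain (cell c) (cell e) = seg_map (cowt c) (tp c) (cowt e) (tp e) (\<lambda>_. 0) (\<lambda>_. 0)"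
  by (simp add: fun_eq_iff zero_chain_def cobj_cell seg_map_def zerom_eq_mk_mor)

lemma id_chain_cell: "id_chain (cell e) = seg_map (cowt e) (tp e) (cowt e) (tp e) (\<lambda>_. 1) (\<lambda>_. 0)"
  by (simp add: fun_eq_iff id_chain_def cobj_cell seg_map_def idm_eq_mk_mor)

lemma cmap2_eq_seg_map:
  assumes "cowt e < cowt c" "cowt c \<le> tp c" "tp c = tp e"
  shows "cmap2 c e = seg_map (cowt c) (tp c) (cowt e) (tp e) (\<lambda>_. 1) (\<lambda>_. 0)"
proof
  fix i
  have "cowt c < i \<and> i \<le> tp c \<or> i = cowt c \<or> \<not> (cowt c \<le> i \<and> i \<le> tp c)"
    by auto
  then show "cmap2 c e i = seg_map (cowt c) (tp c) (cowt e) (tp e) (\<lambda>_. 1) (\<lambda>_. 0) i"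
    using assms
    by (elim disjE) (auto simp: cmap2_def seg_map_def idm_eq_mk_mor pHF_eq_mk_mor zerom_eq_mk_mor
        cell_obj_def seg_obj_def mk_mor_eq_iff)
qed

lemma cmap3_eq_seg_map:
  assumes "cowt c < cowt e" "tp e \<le> tp c" "cowt e \<le> tp e"
  shows "cmap3 c e = seg_map (cowt c) (tp c) (cowt e) (tp e)
    (\<lambda>i. if i = tp e \<and> cowt e = tp e then 1 else 0) (\<lambda>i. if i = tp e then 1 else 0)"
proof
  fix i
  have "i = tp e \<and> cowt e < tp e \<or> i = tp e \<and> cowt e = tp e \<or> i \<noteq> tp e"
    using assms by auto
  then show "cmap3 c e i = seg_map (cowt c) (tp c) (cowt e) (tp e)
      (\<lambda>i. if i = tp e \<and> cowt e = tp e then 1 else 0) (\<lambda>i. if i = tp e then 1 else 0) i"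
    using assms
    by (elim disjE) (auto simp: cmap3_def seg_map_def uF_eq_mk_mor pFH_eq_mk_mor zerom_eq_mk_mor
        cell_obj_def seg_obj_def mk_mor_eq_iff)
qed

lemma cell_map_classification:
  assumes "cowt X \<le> tp X" "cowt Y \<le> tp Y" "tp Y \<le> tp X + 1" "tp Y = tp X + 1 \<Longrightarrow> cowt X < cowt Y"
    and "chain_map (cell X) (cell Y) f"
  shows "exactly_one
    [ tp X = tp Y \<and> cowt X = cowt Y \<and> homotopic (cell X) (cell Y) f (id_chain (cell Y)),
      tp X = tp Y \<and> cowt X > cowt Y \<and> homotopic (cell X) (cell Y) f (cmap2 X Y),
      tp X \<ge> tp Y \<and> cowt X \<le> cowt Y - 2 \<and> homotopic (cell X) (cell Y) f (cmap3 X Y),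
      null_homotopic (cell X) (cell Y) f ]"
proof -
  obtain fa fb where f: "f = seg_map (cowt X) (tp X) (cowt Y) (tp Y) fa fb"
    and chain: "is_chain_coeffs (cowt X) (tp X) (cowt Y) (tp Y) fa fb"
    using assms(5) by (rule chain_map_cellE)
  note htpy = homotopic_cell_iff[of X Y fa fb]
  have "tp X = tp Y \<and> cowt X = cowt Y \<and> homotopic (cell X) (cell Y) f (id_chain (cell Y)) \<longleftrightarrow>
      tp X = tp Y \<and> cowt X = cowt Y \<and>
      coeff_nullhomotopic (cowt X) (tp X) (cowt Y) (tp Y) (\<lambda>i. fa i + 1) fb"
    using htpy by (auto simp: f id_chain_cell)
  moreover have "tp X = tp Y \<and> cowt X > cowt Y \<and> homotopic (cell X) (cell Y) f (cmap2 X Y) \<longleftrightarrow>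
      tp X = tp Y \<and> cowt X > cowt Y \<and>
      coeff_nullhomotopic (cowt X) (tp X) (cowt Y) (tp Y) (\<lambda>i. fa i + 1) fb"
    using htpy assms(1) by (auto simp: f cmap2_eq_seg_map)
  moreover have "tp X \<ge> tp Y \<and> cowt X \<le> cowt Y - 2 \<and> homotopic (cell X) (cell Y) f (cmap3 X Y) \<longleftrightarrow>
      tp Y \<le> tp X \<and> cowt X \<le> cowt Y - 2 \<and>
      coeff_nullhomotopic (cowt X) (tp X) (cowt Y) (tp Y)
        (\<lambda>i. fa i + (if i = tp Y \<and> cowt Y = tp Y then 1 else 0)) (\<lambda>i. fb i + (if i = tp Y then 1 else 0))"
    using htpy assms(2) by (auto simp: f cmap3_eq_seg_map)
  moreover have "null_homotopic (cell X) (cell Y) f \<longleftrightarrow>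
      coeff_nullhomotopic (cowt X) (tp X) (cowt Y) (tp Y) fa fb"
    using htpy by (simp add: null_homotopic_def f zero_chain_cell)
  ultimately show ?thesis
    using coeff_classification[OF chain assms(1-4)] by (simp add: eq_commute[of "tp X"])
qed

theorem lemma8p7:
  fixes a b s t :: int and f :: "int \<Rightarrow> mor"
  assumes "0 \<le> b" and "b \<le> a" and "0 \<le> t" and "t \<le> s"
    and "a \<ge> s" and "a = s \<longrightarrow> b \<ge> t"
    and "chain_map (cell (desusp (a, b))) (cell (s, t)) f"
  shows "exactly_one
    [ tp (desusp (a, b)) = tp (s, t) \<and> cowt (desusp (a, b)) = cowt (s, t) \<and>
        homotopic (cell (desusp (a, b))) (cell (s, t)) f (id_chain (cell (s, t))),
      tp (desusp (a, b)) = tp (s, t) \<and> cowt (desusp (a, b)) > cowt (s, t) \<and>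
        homotopic (cell (desusp (a, b))) (cell (s, t)) f (cmap2 (desusp (a, b)) (s, t)),
      tp (desusp (a, b)) \<ge> tp (s, t) \<and> cowt (desusp (a, b)) \<le> cowt (s, t) - 2 \<and>
        homotopic (cell (desusp (a, b))) (cell (s, t)) f (cmap3 (desusp (a, b)) (s, t)),
      null_homotopic (cell (desusp (a, b))) (cell (s, t)) f ]"
proof -
  have "cowt (desusp (a, b)) = a - 1 - b" "tp (desusp (a, b)) = a - 1"
    and "cowt (s, t) = s - t" "tp (s, t) = s"
    by (simp_all add: cowt_def tp_def desusp_def)
  then show ?thesis
    using assms(1-6) by (intro cell_map_classification[OF _ _ _ _ assms(7)]) auto
qed

end
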